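(* Let $\mathcal N$ be a $d$-dimensional real normed space with norm $\|\cdot\|$, let $k\in\mathbb N$, and let $c_1,\dots,c_m$ be $m$ distinct points of $\mathcal N$, with $m\geq 2$ and $m\geq k+1$. Then the $k$-th closed sphere-of-influence graph on $\{c_1,\dots,c_m\}$ has at least two vertices of degree smaller than $\vartheta(\mathcal N)\,k$, and $\vartheta(\mathcal N)\,k\leq 5^d k$.
   Context: For $c\in\mathcal N$ and $r\geq 0$, $B(c,r)=\{x\in\mathcal N:\|x-c\|\leq r\}$ is the closed ball. For each $i\in\{1,\dots,m\}$, let $r_i^{(k)}$ be the smallest $r$ such that the set $\{j\in\{1,\dots,m\}: j\neq i,\ \|c_i-c_j\|\leq r\}$ has at least $k$ elements (this requires $m\geq k+1$). The $k$-th closed sphere-of-influence graph on $\{c_1,\dots,c_m\}$ has vertex set $\{c_1,\dots,c_m\}$, and $c_i$, $c_j$ ($i\neq j$) are adjacent whenever $B(c_i,r_i^{(k)})\cap B(c_j,r_j^{(k)})\neq\emptyset$. The quantity $\vartheta(\mathcal N)$ is the largest number of points in the ball $B(o,2)$ ($o$ the origin) such that any two of the points are at distance at least $1$ and one of the points is $o$. *)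

theory Defs
  imports "HOL-Analysis.Analysis"
begin

definition has_dimension :: "'a::real_normed_vector itself \<Rightarrow> nat \<Rightarrow> bool" where
  "has_dimension TYPE('a) d \<longleftrightarrow>
     (\<exists>B::'a set. finite B \<and> independent B \<and> span B = UNIV \<and> card B = d)"

definition knn_radius :: "nat \<Rightarrow> 'a::real_normed_vector set \<Rightarrow> 'a \<Rightarrow> real" where
  "knn_radius k C c = Inf {r. r \<ge> 0 \<and> card {x \<in> C. x \<noteq> c \<and> norm (c - x) \<le> r} \<ge> k}"

definition csig_adj :: "nat \<Rightarrow> 'a::real_normed_vector set \<Rightarrow> 'a \<Rightarrow> 'a \<Rightarrow> bool" where
  "csig_adj k C x y \<longleftrightarrow> x \<in> C \<and> y \<in> C \<and> x \<noteq> y \<and>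
     cball x (knn_radius k C x) \<inter> cball y (knn_radius k C y) \<noteq> {}"

definition csig_degree :: "nat \<Rightarrow> 'a::real_normed_vector set \<Rightarrow> 'a \<Rightarrow> nat" where
  "csig_degree k C x = card {y \<in> C. csig_adj k C x y}"

definition theta :: "'a::real_normed_vector itself \<Rightarrow> nat" where
  "theta TYPE('a) = Sup {card S | S::'a set. finite S \<and> 0 \<in> S \<and> S \<subseteq> cball 0 2 \<and>
       (\<forall>x\<in>S. \<forall>y\<in>S. x \<noteq> y \<longrightarrow> norm (x - y) \<ge> 1)}"

end

theory Submission
  imports Defs
begin

text \<open>
  Take a point x whose k-th nearest-neighbour radius r is at most the larger radius of any two
  other points; the two points of smallest radius are such points. Fewer than k neighbours of x
  lie strictly within distance r. Every other neighbour y is sent to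
  (y - x) / max r (norm (y - x) / 2) in cball 0 2, at distance at least 1 from 0. If two
  images are at distance less than 1, the points themselves are closer than the larger of their
  radii; since fewer than k points lie strictly within any point's radius, choosing greedily by
  decreasing radius keeps a 1-separated set of images of at least a 1/k fraction of these
  neighbours. Together with 0 it is admissible for \<vartheta>, so the degree of x is less than
  k \<vartheta>. Finally \<vartheta> \<le> 5^d because the disjoint balls of radius 1/2 around a 1-separated
  subset of cball 0 2 lie in a ball of radius 5/2; volumes are measured by Lebesgue measure on
  the coordinates with respect to a basis.
\<close>

lemma emeasure_lborel_affine_vimage:
  fixes c t :: real and A :: "real set"
  assumes "c > 0" "A \<in> sets lborel"
  shows "ennreal c * emeasure lborel ((\<lambda>y. t + c * y) -` A) = emeasure lborel A"
proof -
  have "emeasure lborel A = emeasure (density (distr lborel borel (\<lambda>x. t + c * x)) (\<lambda>_. ennreal \<bar>c\<bar>)) A"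
    using lborel_real_affine[of c t] assms by simp
  also have "\<dots> = ennreal c * emeasure lborel ((\<lambda>y. t + c * y) -` A)"
    using assms by (simp add: emeasure_density_const emeasure_distr)
  finally show ?thesis by simp
qed

lemma emeasure_PiM_lborel_affine_vimage:
  fixes I :: "'i set" and c :: real and t :: "'i \<Rightarrow> real"
  defines "M \<equiv> PiM I (\<lambda>_. lborel :: real measure)"
  assumes I: "finite I" and c: "c > 0" and X: "X \<in> sets M"
  shows "emeasure M X = ennreal (c ^ card I) *
           emeasure M ((\<lambda>x. restrict (\<lambda>i. t i + c * x i) I) -` X \<inter> space M)"
proof -
  define f where "f = (\<lambda>x::'i\<Rightarrow>real. restrict (\<lambda>i. t i + c * x i) I)"
  interpret product_sigma_finite "\<lambda>_::'i. lborel :: real measure" by standard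
  have f: "f \<in> measurable M M"
    unfolding f_def M_def by measurable
  have "density (distr M M f) (\<lambda>_. ennreal (c ^ card I)) = PiM I (\<lambda>_. lborel)"
  proof (rule PiM_eqI[OF I])
    fix A assume A: "\<And>i. i \<in> I \<Longrightarrow> A i \<in> sets (lborel :: real measure)"
    have [measurable]: "A i \<in> sets borel" if "i \<in> I" for i using A that by simp
    have affine_sets: "(\<lambda>y. t i + c * y) -` A i \<in> sets borel" if "i \<in> I" for i
      using measurable_sets[of "\<lambda>y. t i + c * y" borel borel "A i"] that by simp
    have "f -` Pi\<^sub>E I A \<inter> space M = Pi\<^sub>E I (\<lambda>i. (\<lambda>y. t i + c * y) -` A i)"
      unfolding f_def M_def by (auto simp: space_PiM PiE_iff extensional_def)
    moreover have "Pi\<^sub>E I A \<in> sets M" unfolding M_def using A by (intro sets_PiM_I_finite I) auto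
    ultimately have "emeasure (density (distr M M f) (\<lambda>_. ennreal (c ^ card I))) (Pi\<^sub>E I A)
        = ennreal (c ^ card I) * (\<Prod>i\<in>I. emeasure lborel ((\<lambda>y. t i + c * y) -` A i))"
      using f affine_sets I unfolding M_def by (simp add: emeasure_density_const emeasure_distr emeasure_PiM)
    also have "\<dots> = (\<Prod>i\<in>I. ennreal c * emeasure lborel ((\<lambda>y. t i + c * y) -` A i))"
      using c by (simp add: prod.distrib ennreal_power)
    also have "\<dots> = (\<Prod>i\<in>I. emeasure lborel (A i))"
      using A c by (intro prod.cong refl emeasure_lborel_affine_vimage) auto
    finally show "emeasure (density (distr M M f) (\<lambda>_. ennreal (c ^ card I))) (Pi\<^sub>E I A)
        = (\<Prod>i\<in>I. emeasure lborel (A i))" .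
  qed (simp add: M_def)
  then have "emeasure M X = ennreal (c ^ card I) * emeasure M (f -` X \<inter> space M)"
    using X f unfolding M_def[symmetric] by (metis emeasure_density_const emeasure_distr sets_distr)
  then show ?thesis unfolding f_def .
qed

text \<open>The type 'a has no Lebesgue measure of its own, so volumes are computed on coordinate
  vectors with respect to a basis; coordinates at indices \<open>\<ge> d\<close> are ignored by lincomb.\<close>

locale finite_basis =
  fixes b :: "nat \<Rightarrow> 'a::real_normed_vector" and d :: nat
  assumes inj_basis: "inj_on b {..<d}"
    and independent_basis: "independent (b ` {..<d})"
    and span_basis: "span (b ` {..<d}) = UNIV"
begin

definition lincomb :: "(nat \<Rightarrow> real) \<Rightarrow> 'a" where
  "lincomb x = (\<Sum>j<d. x j *\<^sub>R b j)"

abbreviation coord_space :: "(nat \<Rightarrow> real) measure" where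
  "coord_space \<equiv> PiM {..<d} (\<lambda>_. lborel)"

definition coord_ball :: "'a \<Rightarrow> real \<Rightarrow> (nat \<Rightarrow> real) set" where
  "coord_ball q \<rho> = {x \<in> space coord_space. norm (lincomb x - q) < \<rho>}"

lemma coord_eq_0_if_lincomb_eq_0: "lincomb x = 0 \<Longrightarrow> i < d \<Longrightarrow> x i = 0"
proof (rule ccontr)
  assume z: "lincomb x = 0" and i: "i < d" and nz: "x i \<noteq> 0"
  define u where "u v = x (the_inv_into {..<d} b v)" for v
  have "(\<Sum>v\<in>b ` {..<d}. u v *\<^sub>R v) = (\<Sum>j<d. u (b j) *\<^sub>R b j)"
    using inj_basis by (simp add: sum.reindex)
  also have "\<dots> = lincomb x"
    unfolding lincomb_def using inj_basis by (intro sum.cong refl) (simp add: u_def the_inv_into_f_f)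
  finally have "(\<Sum>v\<in>b ` {..<d}. u v *\<^sub>R v) = 0" using z by simp
  moreover have "u (b i) \<noteq> 0" using nz inj_basis i by (simp add: u_def the_inv_into_f_f)
  ultimately have "dependent (b ` {..<d})"
    using i by (subst real_vector.dependent_finite) auto
  with independent_basis show False by simp
qed

lemma lincomb_surj: "\<exists>x. lincomb x = v"
proof -
  have "v \<in> span (b ` {..<d})" using span_basis by simp
  then obtain u where "(\<Sum>w\<in>b ` {..<d}. u w *\<^sub>R w) = v"
    by (auto simp: real_vector.span_finite)
  then have "lincomb (\<lambda>j. u (b j)) = v" unfolding lincomb_def using inj_basis by (simp add: sum.reindex)
  then show ?thesis by blast
qed

lemma norm_lincomb_bounded_below:
  "\<exists>m>0. \<forall>x. (\<forall>i<d. \<bar>x i\<bar> \<le> 1) \<longrightarrow> (\<exists>i<d. \<bar>x i\<bar> = 1) \<longrightarrow> m \<le> norm (lincomb x)"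
proof (cases "d = 0")
  case True
  then show ?thesis by (intro exI[of _ 1]) auto
next
  case False
  define K where "K = PiE UNIV (\<lambda>i::nat. if i < d then {-1..1::real} else {0})"
  define S where "S = K \<inter> (\<Union>i<d. {x. \<bar>x i\<bar> = 1})"
  have "compactin (product_topology (\<lambda>_. euclidean) UNIV) K"
    unfolding K_def by (subst compactin_PiE) auto
  then have "compact K" by (simp add: euclidean_product_topology)
  moreover have "closed (\<Union>i<d. {x::nat\<Rightarrow>real. \<bar>x i\<bar> = 1})"
    by (intro closed_UN finite_lessThan ballI closed_Collect_eq continuous_intros)
       (auto intro: continuous_on_product_coordinates)
  ultimately have "compact S" unfolding S_def by (rule compact_Int_closed)
  moreover have "(\<lambda>j. if j = 0 then 1 else 0) \<in> S" using False unfolding S_def K_def by auto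
  moreover have "continuous_on S (\<lambda>x. norm (lincomb x))"
    unfolding lincomb_def
    by (intro continuous_intros) (auto intro: continuous_on_subset[OF continuous_on_product_coordinates])
  ultimately obtain z where zS: "z \<in> S" and zmin: "\<And>y. y \<in> S \<Longrightarrow> norm (lincomb z) \<le> norm (lincomb y)"
    using continuous_attains_inf[of S "\<lambda>x. norm (lincomb x)"] by blast
  have "norm (lincomb z) > 0"
    using zS coord_eq_0_if_lincomb_eq_0[of z] unfolding S_def by fastforce
  moreover have "norm (lincomb z) \<le> norm (lincomb x)"
    if "\<forall>i<d. \<bar>x i\<bar> \<le> 1" "\<exists>i<d. \<bar>x i\<bar> = 1" for x
  proof -
    have "lincomb (\<lambda>i. if i < d then x i else 0) = lincomb x" unfolding lincomb_def by simp
    moreover have "(\<lambda>i. if i < d then x i else 0) \<in> S" using that unfolding S_def K_def by (auto simp: abs_le_iff)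
    ultimately show ?thesis using zmin by metis
  qed
  ultimately show ?thesis by blast
qed

lemma coord_le_norm_lincomb: "\<exists>R>0. \<forall>x. \<forall>i<d. \<bar>x i\<bar> \<le> R * norm (lincomb x)"
proof -
  obtain m where m: "m > 0"
    and mle: "\<And>x. \<forall>i<d. \<bar>x i\<bar> \<le> 1 \<Longrightarrow> \<exists>i<d. \<bar>x i\<bar> = 1 \<Longrightarrow> m \<le> norm (lincomb x)"
    using norm_lincomb_bounded_below by blast
  have "\<bar>x i\<bar> \<le> 1 / m * norm (lincomb x)" if i: "i < d" for x i
  proof -
    define s where "s = Max ((\<lambda>j. \<bar>x j\<bar>) ` {..<d})"
    have sge: "\<bar>x j\<bar> \<le> s" if "j < d" for j unfolding s_def using that by (intro Max_ge) auto
    show ?thesis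
    proof (cases "s = 0")
      case True
      then show ?thesis using sge[OF i] m by simp
    next
      case False
      have "s \<in> (\<lambda>j. \<bar>x j\<bar>) ` {..<d}" unfolding s_def using i by (intro Max_in) auto
      then obtain j0 where j0: "j0 < d" "s = \<bar>x j0\<bar>" by auto
      with False have spos: "s > 0" by simp
      have "\<forall>j<d. \<bar>x j / s\<bar> \<le> 1" "\<exists>j<d. \<bar>x j / s\<bar> = 1"
        using sge spos j0 by auto
      then have "m \<le> norm (lincomb (\<lambda>j. x j / s))" by (rule mle)
      also have "lincomb (\<lambda>j. x j / s) = (1 / s) *\<^sub>R lincomb x"
        unfolding lincomb_def by (simp add: scaleR_sum_right)
      finally have "s \<le> norm (lincomb x) / m" using m spos by (simp add: field_simps)
      then show ?thesis using sge[OF i] by simp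
    qed
  qed
  then show ?thesis using m by (intro exI[of _ "1 / m"]) auto
qed

lemma id_borel_measurable_coord_space: "(\<lambda>x. x) \<in> borel_measurable coord_space"
proof (rule measurable_coordinatewise_then_product)
  fix i :: nat
  show "(\<lambda>x. x i) \<in> borel_measurable coord_space"
  proof (cases "i < d")
    case True
    then show ?thesis using measurable_component_singleton[of i "{..<d}" "\<lambda>_. lborel"] by simp
  next
    case False
    then have "x i = undefined" if "x \<in> space coord_space" for x
      using that by (simp add: space_PiM PiE_def extensional_def)
    then show ?thesis
      using measurable_cong[of coord_space "\<lambda>_. undefined" "\<lambda>x. x i" borel] by (simp add: eq_commute)
  qed
qed

lemma coord_ball_sets: "coord_ball q \<rho> \<in> sets coord_space"
proof -
  have "continuous_on UNIV (\<lambda>x. norm (lincomb x - q))"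
    unfolding lincomb_def by (intro continuous_intros) auto
  then have "(\<lambda>x. norm (lincomb x - q)) \<in> borel_measurable coord_space"
    using borel_measurable_continuous_onI measurable_compose[OF id_borel_measurable_coord_space]
    by blast
  then show ?thesis
    unfolding coord_ball_def using measurable_sets[of _ coord_space borel "{..<\<rho>}"] by simp
qed

lemma emeasure_coord_ball_scale:
  assumes "\<rho> > 0"
  shows "emeasure coord_space (coord_ball q \<rho>) = ennreal (\<rho> ^ d) * emeasure coord_space (coord_ball 0 1)"
proof -
  obtain tq where tq: "lincomb tq = q" using lincomb_surj by blast
  define f where "f = (\<lambda>x::nat\<Rightarrow>real. restrict (\<lambda>i. - tq i / \<rho> + (1 / \<rho>) * x i) {..<d})"
  have "lincomb (f x) = (1 / \<rho>) *\<^sub>R (lincomb x - q)" for x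
    unfolding tq[symmetric] lincomb_def f_def
    by (simp add: scaleR_sum_right sum_subtractf[symmetric] algebra_simps
        scaleR_add_left[symmetric] add_divide_distrib diff_divide_distrib)
  then have "norm (lincomb (f x)) < 1 \<longleftrightarrow> norm (lincomb x - q) < \<rho>" for x
    using assms by (simp add: divide_less_eq)
  moreover have "f x \<in> space coord_space" for x unfolding f_def by (simp add: space_PiM)
  ultimately have "f -` coord_ball 0 1 \<inter> space coord_space = coord_ball q \<rho>"
    unfolding coord_ball_def by auto
  moreover have "emeasure coord_space (coord_ball 0 1)
      = ennreal ((1 / \<rho>) ^ d) * emeasure coord_space (f -` coord_ball 0 1 \<inter> space coord_space)"
    unfolding f_def using assms coord_ball_sets
    by (subst emeasure_PiM_lborel_affine_vimage[where c = "1 / \<rho>" and t = "\<lambda>i. - tq i / \<rho>"]) auto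
  moreover have "ennreal (\<rho> ^ d) * ennreal ((1 / \<rho>) ^ d) = 1"
    using assms by (simp add: ennreal_mult''[symmetric] power_mult_distrib[symmetric])
  ultimately show ?thesis by (metis mult.assoc mult_1)
qed

lemma emeasure_coord_ball_finite: "emeasure coord_space (coord_ball 0 1) < \<infinity>"
proof -
  interpret product_sigma_finite "\<lambda>_::nat. lborel :: real measure" by standard
  obtain R where R: "R > 0" "\<And>x i. i < d \<Longrightarrow> \<bar>x i\<bar> \<le> R * norm (lincomb x)"
    using coord_le_norm_lincomb by blast
  have "x i \<in> {-R..R}" if "x \<in> coord_ball 0 1" "i < d" for x i
  proof -
    have "norm (lincomb x) < 1" using that(1) unfolding coord_ball_def by simp
    then have "R * norm (lincomb x) \<le> R" using R(1) by (simp add: mult_left_le)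
    then show ?thesis using R(2)[OF that(2), of x] by (simp add: abs_le_iff)
  qed
  then have "coord_ball 0 1 \<subseteq> PiE {..<d} (\<lambda>_. {-R..R})"
    by (auto simp: coord_ball_def space_PiM PiE_iff extensional_def)
  then have "emeasure coord_space (coord_ball 0 1) \<le> emeasure coord_space (PiE {..<d} (\<lambda>_. {-R..R}))"
    by (intro emeasure_mono sets_PiM_I_finite) auto
  also have "\<dots> = (\<Prod>i<d. emeasure lborel {-R..R})"
    by (subst emeasure_PiM) auto
  also have "\<dots> < \<infinity>" using R by (simp add: ennreal_power)
  finally show ?thesis .
qed

lemma emeasure_coord_ball_pos: "emeasure coord_space (coord_ball 0 1) > 0"
proof -
  interpret product_sigma_finite "\<lambda>_::nat. lborel :: real measure" by standard
  define S where "S = (\<Sum>j<d. norm (b j))"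
  define \<delta> where "\<delta> = 1 / (1 + S)"
  have S0: "S \<ge> 0" unfolding S_def by (simp add: sum_nonneg)
  then have \<delta>0: "\<delta> > 0" unfolding \<delta>_def by simp
  have "norm (lincomb x) < 1" if x: "x \<in> PiE {..<d} (\<lambda>_. {-\<delta><..<\<delta>})" for x
  proof -
    have "norm (lincomb x) \<le> (\<Sum>j<d. \<bar>x j\<bar> * norm (b j))"
      unfolding lincomb_def using norm_sum[of "\<lambda>j. x j *\<^sub>R b j"] by simp
    also have "\<dots> \<le> (\<Sum>j<d. \<delta> * norm (b j))"
      using x by (intro sum_mono mult_right_mono) (force simp: PiE_iff abs_le_iff)+
    also have "\<dots> = \<delta> * S" unfolding S_def by (simp add: sum_distrib_left)
    also have "\<dots> < 1" unfolding \<delta>_def using S0 by (simp add: field_simps)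
    finally show ?thesis .
  qed
  then have "PiE {..<d} (\<lambda>_. {-\<delta><..<\<delta>}) \<subseteq> coord_ball 0 1"
    unfolding coord_ball_def by (auto simp: space_PiM PiE_iff)
  then have "emeasure coord_space (PiE {..<d} (\<lambda>_. {-\<delta><..<\<delta>})) \<le> emeasure coord_space (coord_ball 0 1)"
    using coord_ball_sets by (intro emeasure_mono) auto
  moreover have "emeasure coord_space (PiE {..<d} (\<lambda>_. {-\<delta><..<\<delta>})) = (\<Prod>i<d. emeasure lborel {-\<delta><..<\<delta>})"
    by (subst emeasure_PiM) auto
  moreover have "(\<Prod>i<d. emeasure lborel {-\<delta><..<\<delta>}) > 0"
    using \<delta>0 by (simp add: ennreal_power)
  ultimately show ?thesis by simp
qed

lemma card_separated_le_5_pow: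
  fixes P :: "'a set"
  assumes "finite P" and "P \<subseteq> cball 0 2"
    and sep: "\<forall>p\<in>P. \<forall>p'\<in>P. p \<noteq> p' \<longrightarrow> 1 \<le> norm (p - p')"
  shows "card P \<le> 5 ^ d"
proof -
  obtain m where m: "emeasure coord_space (coord_ball 0 1) = ennreal m" "m > 0"
    using emeasure_coord_ball_finite emeasure_coord_ball_pos by (cases "emeasure coord_space (coord_ball 0 1)") auto
  have "disjoint_family_on (\<lambda>p. coord_ball p (1/2)) P"
    unfolding disjoint_family_on_def
  proof (intro ballI impI, rule ccontr)
    fix p p' assume pp: "p \<in> P" "p' \<in> P" "p \<noteq> p'" "coord_ball p (1/2) \<inter> coord_ball p' (1/2) \<noteq> {}"
    then obtain x where "norm (lincomb x - p) < 1/2" "norm (lincomb x - p') < 1/2"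
      unfolding coord_ball_def by auto
    then have "norm (p - p') < 1"
      using norm_triangle_lt[of "p - lincomb x" "lincomb x - p'" 1] by (simp add: norm_minus_commute)
    with sep pp show False by force
  qed
  then have "(\<Sum>p\<in>P. emeasure coord_space (coord_ball p (1/2)))
      = emeasure coord_space (\<Union>p\<in>P. coord_ball p (1/2))"
    using assms(1) coord_ball_sets by (intro sum_emeasure) auto
  also have "\<dots> \<le> emeasure coord_space (coord_ball 0 (5/2))"
  proof (intro emeasure_mono coord_ball_sets subsetI)
    fix x assume "x \<in> (\<Union>p\<in>P. coord_ball p (1/2))"
    then obtain p where "p \<in> P" "x \<in> space coord_space" "norm (lincomb x - p) < 1/2"
      unfolding coord_ball_def by auto
    moreover from this have "norm p \<le> 2" using assms(2) by auto
    ultimately show "x \<in> coord_ball 0 (5/2)"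
      using norm_triangle_lt[of "lincomb x - p" p "5/2"] unfolding coord_ball_def by simp
  qed
  finally have "(\<Sum>p\<in>P. ennreal ((1/2) ^ d) * ennreal m) \<le> ennreal ((5/2) ^ d) * ennreal m"
    using m emeasure_coord_ball_scale[of "1/2"] emeasure_coord_ball_scale[of "5/2" 0] by simp
  then have "ennreal (real (card P) * (1/2) ^ d * m) \<le> ennreal ((5/2) ^ d * m)"
    using m by (simp add: ennreal_mult''[symmetric] ennreal_of_nat_eq_real_of_nat)
  then have "real (card P) * (1/2) ^ d \<le> (5/2) ^ d"
    using m by (subst (asm) ennreal_le_iff) auto
  then have "real (card P) \<le> 5 ^ d" by (simp add: field_simps)
  then show ?thesis by (simp flip: of_nat_le_iff)
qed

end

lemma card_separated_le_5_pow:
  fixes P :: "'a::real_normed_vector set"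
  assumes "has_dimension TYPE('a) d" and "finite P" and "P \<subseteq> cball 0 2"
    and "\<forall>p\<in>P. \<forall>p'\<in>P. p \<noteq> p' \<longrightarrow> 1 \<le> norm (p - p')"
  shows "card P \<le> 5 ^ d"
proof -
  obtain B :: "'a set" where B: "finite B" "independent B" "span B = UNIV" "card B = d"
    using assms(1) unfolding has_dimension_def by blast
  obtain b where "bij_betw b {..<d} B"
    using ex_bij_betw_nat_finite[OF B(1)] B(4) by (auto simp: atLeast0LessThan)
  then have "finite_basis b d" using B by unfold_locales (auto simp: bij_betw_def)
  then show ?thesis using finite_basis.card_separated_le_5_pow assms(2-4) by blast
qed

lemma knn_radius_le:
  assumes "0 \<le> r" and "k \<le> card {z\<in>C. z \<noteq> x \<and> norm (x - z) \<le> r}"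
  shows "knn_radius k C x \<le> r"
  unfolding knn_radius_def using assms by (intro cInf_lower) (auto intro: bdd_belowI[of _ 0])

lemma knn_radius_pos:
  assumes "finite C" and "k \<ge> 1" and "card C \<ge> k + 1" and "x \<in> C"
  shows "knn_radius k C x > 0"
proof -
  define D where "D = (\<lambda>z. norm (x - z)) ` (C - {x})"
  have "card (C - {x}) \<ge> k" using assms by (simp add: card_Diff_singleton)
  then have "card (C - {x}) > 0" using assms(2) by simp
  then have "C - {x} \<noteq> {}" by (simp add: card_gt_0_iff)
  then have D: "finite D" "D \<noteq> {}" unfolding D_def using assms(1) by auto
  have "0 < Min D" using D unfolding D_def by auto
  also have "Min D \<le> knn_radius k C x"
    unfolding knn_radius_def
  proof (rule cInf_greatest)
    have "{z\<in>C. z \<noteq> x \<and> norm (x - z) \<le> Max D} = C - {x}"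
      using D unfolding D_def by auto
    moreover have "Max D \<in> D" using D by simp
    then have "Max D \<ge> 0" unfolding D_def by auto
    ultimately have "Max D \<in> {r. r \<ge> 0 \<and> k \<le> card {z\<in>C. z \<noteq> x \<and> norm (x - z) \<le> r}}"
      using \<open>card (C - {x}) \<ge> k\<close> by simp
    then show "{r. r \<ge> 0 \<and> k \<le> card {z\<in>C. z \<noteq> x \<and> norm (x - z) \<le> r}} \<noteq> {}" by blast
  next
    fix r assume r: "r \<in> {r. r \<ge> 0 \<and> k \<le> card {z\<in>C. z \<noteq> x \<and> norm (x - z) \<le> r}}"
    show "Min D \<le> r"
    proof (rule ccontr)
      assume "\<not> Min D \<le> r"
      moreover have "Min D \<le> norm (x - z)" if "z \<in> C - {x}" for z
        using D that unfolding D_def by simp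
      ultimately have "{z\<in>C. z \<noteq> x \<and> norm (x - z) \<le> r} = {}" by force
      then show False using r assms(2) by (simp only: mem_Collect_eq card.empty) linarith
    qed
  qed
  finally show ?thesis .
qed

lemma card_within_knn_radius_less:
  assumes "finite C" and "k \<ge> 1"
  shows "card {z\<in>C. z \<noteq> x \<and> norm (x - z) < knn_radius k C x} < k"
proof (rule ccontr)
  define T where "T = {z\<in>C. z \<noteq> x \<and> norm (x - z) < knn_radius k C x}"
  assume "\<not> card T < k"
  then have "k \<le> card T" by simp
  then have "card T > 0" using assms(2) by simp
  then have "finite T" "T \<noteq> {}" by (simp_all add: card_gt_0_iff)
  define r where "r = Max ((\<lambda>z. norm (x - z)) ` T)"
  have "r \<in> (\<lambda>z. norm (x - z)) ` T" unfolding r_def using \<open>finite T\<close> \<open>T \<noteq> {}\<close> by simp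
  then have "0 \<le> r" "r < knn_radius k C x" unfolding T_def by auto
  have "T \<subseteq> {z\<in>C. z \<noteq> x \<and> norm (x - z) \<le> r}"
    unfolding r_def using \<open>finite T\<close> by (auto simp: T_def)
  then have "card T \<le> card {z\<in>C. z \<noteq> x \<and> norm (x - z) \<le> r}"
    using assms(1) by (intro card_mono) auto
  then have "k \<le> card {z\<in>C. z \<noteq> x \<and> norm (x - z) \<le> r}"
    using \<open>k \<le> card T\<close> by linarith
  with \<open>0 \<le> r\<close> have "knn_radius k C x \<le> r" by (rule knn_radius_le)
  with \<open>r < knn_radius k C x\<close> show False by simp
qed

lemma csig_adj_imp_dist_le:
  assumes "csig_adj k C x y"
  shows "norm (x - y) \<le> knn_radius k C x + knn_radius k C y"
proof -
  from assms obtain p where "dist x p \<le> knn_radius k C x" "dist y p \<le> knn_radius k C y"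
    unfolding csig_adj_def by auto
  then show ?thesis using dist_triangle[of x y p] by (simp add: dist_norm norm_minus_commute)
qed

definition cball2_retraction :: "real \<Rightarrow> 'a::real_normed_vector \<Rightarrow> 'a" where
  "cball2_retraction r a = (1 / max r (norm a / 2)) *\<^sub>R a"

lemma norm_cball2_retraction_le: "r > 0 \<Longrightarrow> norm (cball2_retraction r a) \<le> 2"
  by (auto simp: cball2_retraction_def divide_le_eq max_def)

lemma norm_cball2_retraction_ge: "r > 0 \<Longrightarrow> r \<le> norm a \<Longrightarrow> 1 \<le> norm (cball2_retraction r a)"
  by (auto simp: cball2_retraction_def le_divide_eq max_def)

lemma cball2_retraction_close_imp_aux:
  fixes a b :: "'a::real_normed_vector" and r :: real
  defines "s \<equiv> max r (norm a / 2)" and "t \<equiv> max r (norm b / 2)"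
  assumes "r > 0" and "s \<le> t" and close: "norm (cball2_retraction r a - cball2_retraction r b) < 1"
  shows "norm (a - b) < 2 * t - r"
proof -
  have "r \<le> s" "s > 0" "norm b \<le> 2 * t" using assms(3) unfolding s_def t_def by auto
  have "\<bar>s / t - 1\<bar> = 1 - s / t" using \<open>s > 0\<close> \<open>s \<le> t\<close> by (simp add: divide_le_eq_1)
  have "a - b = s *\<^sub>R (cball2_retraction r a - cball2_retraction r b) + (s / t - 1) *\<^sub>R b"
    using \<open>s > 0\<close> \<open>s \<le> t\<close> by (simp add: cball2_retraction_def s_def[symmetric] t_def[symmetric] algebra_simps)
  then have "norm (a - b) \<le> norm (s *\<^sub>R (cball2_retraction r a - cball2_retraction r b)) + norm ((s / t - 1) *\<^sub>R b)"
    by (simp only: norm_triangle_ineq)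
  also have "\<dots> = s * norm (cball2_retraction r a - cball2_retraction r b) + (1 - s / t) * norm b"
    using \<open>s > 0\<close> \<open>\<bar>s / t - 1\<bar> = 1 - s / t\<close> by simp
  also have "\<dots> < s + (1 - s / t) * (2 * t)"
    using \<open>s > 0\<close> \<open>s \<le> t\<close> \<open>norm b \<le> 2 * t\<close> close
    by (intro add_less_le_mono mult_left_mono) (auto simp: divide_le_eq_1)
  also have "\<dots> = 2 * t - s" using \<open>s > 0\<close> \<open>s \<le> t\<close> by (simp add: field_simps)
  finally show ?thesis using \<open>r \<le> s\<close> by linarith
qed

lemma cball2_retraction_close_imp:
  fixes a b :: "'a::real_normed_vector"
  assumes "r > 0" and "norm (cball2_retraction r a - cball2_retraction r b) < 1"
  shows "norm (a - b) < max (2 * r) (max (norm a) (norm b)) - r"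
proof (cases "max r (norm a / 2) \<le> max r (norm b / 2)")
  case True
  then have "2 * max r (norm b / 2) = max (2 * r) (max (norm a) (norm b))" by (auto simp: max_def)
  then show ?thesis using cball2_retraction_close_imp_aux[OF assms(1) True assms(2)] by simp
next
  case False
  then have "2 * max r (norm a / 2) = max (2 * r) (max (norm a) (norm b))" by (auto simp: max_def)
  then show ?thesis
    using cball2_retraction_close_imp_aux[of r b a] False assms by (simp add: norm_minus_commute)
qed

lemma greedy_separated_subset:
  fixes U :: "'a::real_normed_vector set" and w :: "'a \<Rightarrow> real" and q :: "'a \<Rightarrow> 'b::real_normed_vector"
  assumes "finite U"
    and "\<And>y z. y \<in> U \<Longrightarrow> z \<in> U \<Longrightarrow> y \<noteq> z \<Longrightarrow> norm (q y - q z) < 1 \<Longrightarrow> norm (y - z) < max (w y) (w z)"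
    and "\<And>z. z \<in> U \<Longrightarrow> card {y\<in>U. y \<noteq> z \<and> norm (y - z) < w z} < k"
  shows "\<exists>S\<subseteq>U. (\<forall>y\<in>S. \<forall>z\<in>S. y \<noteq> z \<longrightarrow> 1 \<le> norm (q y - q z)) \<and> card U \<le> k * card S"
  using assms
proof (induction U rule: finite_psubset_induct)
  case (psubset U)
  show ?case
  proof (cases "U = {}")
    case True
    then show ?thesis by auto
  next
    case False
    obtain z where "z \<in> U" and "Max (w ` U) = w z"
      using obtains_MAX[OF psubset.hyps False] by metis
    then have zmax: "w y \<le> w z" if "y \<in> U" for y using psubset.hyps that by (metis Max_ge finite_imageI imageI)
    define R where "R = {y\<in>U. norm (q y - q z) < 1}"
    define Nz where "Nz = {y\<in>U. y \<noteq> z \<and> norm (y - z) < w z}"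
    have "norm (y - z) < w z" if "y \<in> U" "y \<noteq> z" "norm (q y - q z) < 1" for y
      using psubset.prems(1)[OF that(1) \<open>z \<in> U\<close> that(2,3)] zmax[OF that(1)] by (simp add: max_absorb2)
    then have "R \<subseteq> insert z Nz" unfolding R_def Nz_def by auto
    moreover have "finite Nz" unfolding Nz_def using psubset.hyps by simp
    ultimately have "card R \<le> Suc (card Nz)"
      using card_mono[of "insert z Nz" R] card_insert_le_m1[of "Suc (card Nz)" Nz z] by simp
    then have "card R \<le> k" using psubset.prems(2)[OF \<open>z \<in> U\<close>] unfolding Nz_def by simp
    have "z \<in> R" using \<open>z \<in> U\<close> unfolding R_def by simp
    then have "U - R \<subset> U" using \<open>z \<in> U\<close> by blast
    moreover have "card {y\<in>U - R. y \<noteq> x \<and> norm (y - x) < w x} < k" if "x \<in> U - R" for x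
    proof -
      have "card {y\<in>U - R. y \<noteq> x \<and> norm (y - x) < w x} \<le> card {y\<in>U. y \<noteq> x \<and> norm (y - x) < w x}"
        using psubset.hyps by (intro card_mono) auto
      then show ?thesis using psubset.prems(2)[of x] that by simp
    qed
    ultimately obtain S where S: "S \<subseteq> U - R" "\<forall>y\<in>S. \<forall>z\<in>S. y \<noteq> z \<longrightarrow> 1 \<le> norm (q y - q z)"
      "card (U - R) \<le> k * card S"
      using psubset.IH[of "U - R"] psubset.prems(1) by blast
    have "z \<notin> S" "finite S" using S(1) \<open>z \<in> R\<close> psubset.hyps finite_subset by auto
    have "\<forall>y\<in>insert z S. \<forall>x\<in>insert z S. y \<noteq> x \<longrightarrow> 1 \<le> norm (q y - q x)"
      using S(1,2) unfolding R_def by (auto simp: norm_minus_commute)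
    moreover have "card U \<le> k * card (insert z S)"
    proof -
      have "card U = card R + card (U - R)"
        using psubset.hyps card_Diff_subset[of R U] card_mono[of U R] unfolding R_def by fastforce
      also have "\<dots> \<le> k + k * card S" using \<open>card R \<le> k\<close> S(3) by simp
      also have "\<dots> = k * card (insert z S)" using \<open>z \<notin> S\<close> \<open>finite S\<close> by simp
      finally show ?thesis .
    qed
    ultimately show ?thesis using S(1) \<open>z \<in> U\<close> by (intro exI[of _ "insert z S"]) auto
  qed
qed

lemma
  fixes S :: "'a::real_normed_vector set"
  assumes "has_dimension TYPE('a) d"
  shows theta_le_5_pow: "theta TYPE('a) \<le> 5 ^ d"
    and card_le_theta: "finite S \<Longrightarrow> 0 \<in> S \<Longrightarrow> S \<subseteq> cball 0 2 \<Longrightarrow>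
      \<forall>x\<in>S. \<forall>y\<in>S. x \<noteq> y \<longrightarrow> 1 \<le> norm (x - y) \<Longrightarrow> card S \<le> theta TYPE('a)"
proof -
  define Z where "Z = {card S | S::'a set. finite S \<and> 0 \<in> S \<and> S \<subseteq> cball 0 2 \<and>
       (\<forall>x\<in>S. \<forall>y\<in>S. x \<noteq> y \<longrightarrow> norm (x - y) \<ge> 1)}"
  have theta: "theta TYPE('a) = Sup Z" unfolding Z_def theta_def by simp
  have bound: "\<forall>z\<in>Z. z \<le> 5 ^ d" unfolding Z_def using card_separated_le_5_pow[OF assms] by auto
  have "card {0::'a} \<in> Z" unfolding Z_def by (intro CollectI exI[of _ "{0::'a}"]) auto
  then show "theta TYPE('a) \<le> 5 ^ d" unfolding theta using bound by (intro cSup_least) auto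
  show "card S \<le> theta TYPE('a)" if "finite S" "0 \<in> S" "S \<subseteq> cball 0 2"
      "\<forall>x\<in>S. \<forall>y\<in>S. x \<noteq> y \<longrightarrow> 1 \<le> norm (x - y)"
    unfolding theta using that bound by (intro cSup_upper) (auto simp: Z_def bdd_above_def)
qed

lemma card_separated_outside_unit_ball_less_theta:
  fixes S :: "'a::real_normed_vector set"
  assumes "has_dimension TYPE('a) d" and "finite S" and "S \<subseteq> cball 0 2" and "\<forall>u\<in>S. 1 \<le> norm u"
    and "\<forall>u\<in>S. \<forall>v\<in>S. u \<noteq> v \<longrightarrow> 1 \<le> norm (u - v)"
  shows "card S < theta TYPE('a)"
proof -
  have "0 \<notin> S" using assms(4) by force
  have "card (insert 0 S) \<le> theta TYPE('a)"
    using assms by (intro card_le_theta) (auto simp: norm_minus_commute)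
  then show ?thesis using \<open>0 \<notin> S\<close> assms(2) by simp
qed

lemma card_far_csig_neighbours_le:
  fixes C :: "'a::real_normed_vector set"
  assumes dim: "has_dimension TYPE('a) d" and "finite C" and "k \<ge> 1" and "card C \<ge> k + 1"
    and "x \<in> C"
    and below: "\<And>y z. y \<in> C \<Longrightarrow> z \<in> C \<Longrightarrow> y \<noteq> z \<Longrightarrow>
      knn_radius k C x \<le> max (knn_radius k C y) (knn_radius k C z)"
  shows "card {y\<in>C. csig_adj k C x y \<and> knn_radius k C x \<le> norm (y - x)} + k \<le> theta TYPE('a) * k"
proof -
  define \<rho> where "\<rho> = knn_radius k C"
  define r where "r = \<rho> x"
  define N where "N = {y\<in>C. csig_adj k C x y \<and> r \<le> norm (y - x)}"
  have "r > 0" unfolding r_def \<rho>_def using knn_radius_pos assms by blast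
  have "finite N" unfolding N_def using \<open>finite C\<close> by simp
  have N: "y \<in> C" "y \<noteq> x" "r \<le> norm (y - x)" "norm (y - x) \<le> r + \<rho> y" if "y \<in> N" for y
    using that csig_adj_imp_dist_le[of k C x y] unfolding N_def csig_adj_def r_def \<rho>_def
    by (auto simp: norm_minus_commute)
  define q where "q y = cball2_retraction r (y - x)" for y
  have "norm (y - z) < max (\<rho> y) (\<rho> z)"
    if "y \<in> N" "z \<in> N" "y \<noteq> z" "norm (q y - q z) < 1" for y z
  proof -
    have "norm (y - z) < max (2 * r) (max (norm (y - x)) (norm (z - x))) - r"
      using cball2_retraction_close_imp[OF \<open>r > 0\<close>] that(4) unfolding q_def by fastforce
    moreover have "r \<le> max (\<rho> y) (\<rho> z)" using below[of y z] N that unfolding r_def \<rho>_def by auto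
    ultimately show ?thesis using N[OF that(1)] N[OF that(2)] by (auto simp: max_def split: if_splits)
  qed
  moreover have "card {y\<in>N. y \<noteq> z \<and> norm (y - z) < \<rho> z} < k" if "z \<in> N" for z
  proof -
    have "card {y\<in>N. y \<noteq> z \<and> norm (y - z) < \<rho> z} \<le> card {y\<in>C. y \<noteq> z \<and> norm (z - y) < knn_radius k C z}"
      using N \<open>finite C\<close> unfolding \<rho>_def by (intro card_mono) (auto simp: norm_minus_commute)
    then show ?thesis using card_within_knn_radius_less[OF \<open>finite C\<close> \<open>k \<ge> 1\<close>, of z] by simp
  qed
  ultimately have "\<exists>S\<subseteq>N. (\<forall>y\<in>S. \<forall>z\<in>S. y \<noteq> z \<longrightarrow> 1 \<le> norm (q y - q z)) \<and> card N \<le> k * card S"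
    by (rule greedy_separated_subset[OF \<open>finite N\<close>])
  then obtain S where S: "S \<subseteq> N" "\<forall>y\<in>S. \<forall>z\<in>S. y \<noteq> z \<longrightarrow> 1 \<le> norm (q y - q z)"
    "card N \<le> k * card S"
    by blast
  have "finite S" using S(1) \<open>finite N\<close> by (rule finite_subset)
  have "inj_on q S" using S(2) by (intro inj_onI) force
  have "card (q ` S) < theta TYPE('a)"
  proof (rule card_separated_outside_unit_ball_less_theta[OF dim])
    show "q ` S \<subseteq> cball 0 2" unfolding q_def using \<open>r > 0\<close> norm_cball2_retraction_le by auto
    show "\<forall>u\<in>q ` S. 1 \<le> norm u"
      using S(1) N(3) \<open>r > 0\<close> norm_cball2_retraction_ge unfolding q_def by blast
  qed (use \<open>finite S\<close> S(2) in auto)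
  then have "card N + k \<le> k * theta TYPE('a)"
    using S(3) \<open>inj_on q S\<close> mult_le_mono2[of "card S + 1" "theta TYPE('a)" k] by (simp add: card_image)
  then show ?thesis unfolding N_def r_def \<rho>_def by (simp add: mult.commute)
qed

lemma csig_degree_less_theta:
  fixes C :: "'a::real_normed_vector set"
  assumes "has_dimension TYPE('a) d" and "finite C" and "k \<ge> 1" and "card C \<ge> k + 1"
    and "x \<in> C"
    and "\<And>y z. y \<in> C \<Longrightarrow> z \<in> C \<Longrightarrow> y \<noteq> z \<Longrightarrow>
      knn_radius k C x \<le> max (knn_radius k C y) (knn_radius k C z)"
  shows "csig_degree k C x < theta TYPE('a) * k"
proof -
  define N_near where "N_near = {y\<in>C. csig_adj k C x y \<and> norm (y - x) < knn_radius k C x}"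
  define N_far where "N_far = {y\<in>C. csig_adj k C x y \<and> knn_radius k C x \<le> norm (y - x)}"
  have "card N_near \<le> card {z\<in>C. z \<noteq> x \<and> norm (x - z) < knn_radius k C x}"
    using assms(2) unfolding N_near_def csig_adj_def by (intro card_mono) (auto simp: norm_minus_commute)
  then have "card N_near < k" using card_within_knn_radius_less[OF assms(2,3)] by (rule le_less_trans)
  have "csig_degree k C x = card (N_near \<union> N_far)"
    unfolding csig_degree_def N_near_def N_far_def by (intro arg_cong[of _ _ card]) auto
  also have "\<dots> \<le> card N_near + card N_far" by (rule card_Un_le)
  also have "\<dots> < theta TYPE('a) * k"
    using \<open>card N_near < k\<close> card_far_csig_neighbours_le[OF assms] unfolding N_far_def by linarith
  finally show ?thesis .
qed

lemma two_points_below_pairwise_max: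
  fixes f :: "'a \<Rightarrow> 'b::linorder"
  assumes "finite C" and "card C \<ge> 2"
  obtains x1 x2 where "x1 \<in> C" "x2 \<in> C" "x1 \<noteq> x2"
    and "\<And>x y z. x \<in> {x1, x2} \<Longrightarrow> y \<in> C \<Longrightarrow> z \<in> C \<Longrightarrow> y \<noteq> z \<Longrightarrow> f x \<le> max (f y) (f z)"
proof -
  have "C \<noteq> {}" using assms by auto
  then obtain x1 where "x1 \<in> C" and x1: "\<And>y. y \<in> C \<Longrightarrow> f x1 \<le> f y"
    using arg_min_if_finite[OF assms(1), of f] by (metis not_le)
  have "card (C - {x1}) > 0" using assms \<open>x1 \<in> C\<close> by (simp add: card_Diff_singleton)
  then have "C - {x1} \<noteq> {}" by (simp add: card_gt_0_iff)
  then obtain x2 where "x2 \<in> C - {x1}" and x2: "\<And>y. y \<in> C - {x1} \<Longrightarrow> f x2 \<le> f y"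
    using arg_min_if_finite[of "C - {x1}" f] assms(1) by (metis finite_Diff not_le)
  show thesis
  proof (rule that)
    show "f x \<le> max (f y) (f z)" if "x \<in> {x1, x2}" "y \<in> C" "z \<in> C" "y \<noteq> z" for x y z
      using that x1 x2[of y] x2[of z] by (auto simp: le_max_iff_disj)
  qed (use \<open>x1 \<in> C\<close> \<open>x2 \<in> C - {x1}\<close> in auto)
qed

theorem mainTheorem1:
  fixes C :: "'a::real_normed_vector set" and d k :: nat
  assumes "has_dimension TYPE('a) d"
    and "k \<ge> 1"
    and "finite C" and "card C \<ge> 2" and "card C \<ge> k + 1"
  shows "(\<exists>x\<in>C. \<exists>y\<in>C. x \<noteq> y \<and>
            real (csig_degree k C x) < real (theta TYPE('a) * k) \<and>
            real (csig_degree k C y) < real (theta TYPE('a) * k))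
         \<and> theta TYPE('a) * k \<le> 5 ^ d * k"
proof
  obtain x1 x2 where "x1 \<in> C" "x2 \<in> C" "x1 \<noteq> x2" and below:
    "\<And>x y z. x \<in> {x1, x2} \<Longrightarrow> y \<in> C \<Longrightarrow> z \<in> C \<Longrightarrow> y \<noteq> z \<Longrightarrow>
      knn_radius k C x \<le> max (knn_radius k C y) (knn_radius k C z)"
    using two_points_below_pairwise_max[OF assms(3,4), of "knn_radius k C"] by blast
  have "csig_degree k C x < theta TYPE('a) * k" if "x \<in> {x1, x2}" for x
    using csig_degree_less_theta[OF assms(1,3,2,5)] below[OF that] that \<open>x1 \<in> C\<close> \<open>x2 \<in> C\<close> by blast
  then show "\<exists>x\<in>C. \<exists>y\<in>C. x \<noteq> y \<and>
      real (csig_degree k C x) < real (theta TYPE('a) * k) \<and>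
      real (csig_degree k C y) < real (theta TYPE('a) * k)"
    using \<open>x1 \<in> C\<close> \<open>x2 \<in> C\<close> \<open>x1 \<noteq> x2\<close> by (metis insertCI of_nat_less_iff)
  show "theta TYPE('a) * k \<le> 5 ^ d * k"
    using theta_le_5_pow[OF assms(1)] by simp
qed

end
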